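(* Let $l\ge3$ and let $a,b\ge2$ be integers with $a+b=l+1$. Let $G$ be a spanning subgraph of $\widetilde O_{k+1}$ containing no cycle of length $4l+2$. If $C$ is a cycle of length $4a$ in $G$ and $C'$ is a cycle of length $4b$ in $G$ with $E(C)\cap E(C')\ne\emptyset$, then $|D(C)\cap D(C')|\ge 2$.
   Context: $\widetilde O_{k+1}=J(2k+1;k,k+1)$ is the bipartite graph with vertex set $\binom{[2k+1]}{k}\cup\binom{[2k+1]}{k+1}$, with $u,v$ adjacent iff $u\subset v$ or $v\subset u$. The direction $d(uv)$ of an edge $\{u,v\}$ is the single element of $u\,\Delta\, v$. For a subgraph $F$, $D(F)=\{d(e): e\in E(F)\}$. A spanning subgraph has the same vertex set. *)

theory Defs
  imports Main
begin

text \<open>Vertex set of the middle-levels graph J(2k+1;k,k+1) on ground set [2k+1] = {1..2k+1}.\<close>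
definition OV :: "nat \<Rightarrow> nat set set" where
  "OV k = {u. u \<subseteq> {1..2*k+1} \<and> (card u = k \<or> card u = k + 1)}"

definition OE :: "nat \<Rightarrow> nat set set set" where
  "OE k = {{u, v} | u v. u \<in> OV k \<and> v \<in> OV k \<and> (u \<subset> v \<or> v \<subset> u)}"

text \<open>A spanning subgraph is determined by its edge set, a subset of OE k.\<close>
definition spanning_subgraph :: "nat \<Rightarrow> nat set set set \<Rightarrow> bool" where
  "spanning_subgraph k E \<longleftrightarrow> E \<subseteq> OE k"

definition is_cycle :: "nat set set set \<Rightarrow> nat \<Rightarrow> nat set list \<Rightarrow> bool" where
  "is_cycle E n vs \<longleftrightarrow> n \<ge> 3 \<and> length vs = n \<and> distinct vs \<and>
     (\<forall>i<n. {vs ! i, vs ! ((i + 1) mod n)} \<in> E)"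

definition cycle_edges :: "nat set list \<Rightarrow> nat set set set" where
  "cycle_edges vs = {{vs ! i, vs ! ((i + 1) mod length vs)} | i. i < length vs}"

definition dir :: "nat set set \<Rightarrow> nat" where
  "dir e = the_elem (\<Union>e - \<Inter>e)"

definition D :: "nat set set set \<Rightarrow> nat set" where
  "D F = dir ` F"

end

theory Submission
  imports Defs
begin

text \<open>Along any path in the middle-levels graph, the symmetric difference of the end vertices
  consists of directions of edges of the path. So if two cycles share an edge xy but no direction
  other than d = dir xy, every common vertex u satisfies sym_diff u x \<subseteq> {d} = sym_diff y x,
  hence u \<in> {x, y}. The two cycles then meet exactly in the edge xy, and deleting that edge
  from their union leaves a cycle of length 4a + 4b - 2 = 4l + 2.\<close>

lemma OV_psubset_diff:
  assumes "u \<in> OV k" "v \<in> OV k" "u \<subset> v"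
  shows "v - u = {dir {u, v}}"
proof -
  have "finite v" using assms(2) by (auto simp: OV_def intro: finite_subset)
  then have "card u < card v" using assms(3) by (rule psubset_card_mono)
  then have "card u = k" "card v = k + 1" using assms(1,2) by (auto simp: OV_def)
  moreover have "finite u" using \<open>finite v\<close> assms(3) by (blast intro: finite_subset)
  ultimately have "card (v - u) = 1" using assms(3) by (simp add: card_Diff_subset)
  then obtain d where d: "v - u = {d}" by (rule card_1_singletonE)
  have "\<Union>{u, v} = v" "\<Inter>{u, v} = u" using assms(3) by auto
  then have "dir {u, v} = the_elem (v - u)" unfolding dir_def by (simp only:)
  with d show ?thesis by simp
qed

lemma sym_diff_OE:
  assumes "{p, q} \<in> OE k"
  shows "sym_diff p q = {dir {p, q}}"
proof -
  obtain u v where uv: "{p, q} = {u, v}" "u \<in> OV k" "v \<in> OV k" "u \<subset> v \<or> v \<subset> u"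
    using assms unfolding OE_def mem_Collect_eq by (elim exE conjE) (rule that)
  have "sym_diff u v = {dir {u, v}}"
  proof (cases "u \<subset> v")
    case True
    then show ?thesis using OV_psubset_diff[OF uv(2,3)] by blast
  next
    case False
    then have "v \<subset> u" using uv(4) by blast
    then show ?thesis using OV_psubset_diff[OF uv(3,2)] by (auto simp: insert_commute)
  qed
  moreover have "sym_diff p q = sym_diff u v" using uv(1) by (auto simp: doubleton_eq_iff)
  ultimately show ?thesis using uv(1) by simp
qed

lemma successively_iff_nth:
  "successively P xs \<longleftrightarrow> (\<forall>i. Suc i < length xs \<longrightarrow> P (xs ! i) (xs ! Suc i))"
  by (induction P xs rule: successively.induct) (auto simp: less_Suc_eq_0_disj)

lemma is_cycle_iff_successively:
  "is_cycle E n xs \<longleftrightarrow> 3 \<le> n \<and> length xs = n \<and> distinct xs \<and>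
     successively (\<lambda>u v. {u, v} \<in> E) xs \<and> {last xs, hd xs} \<in> E"
proof (cases "3 \<le> n \<and> length xs = n")
  case True
  have "(\<forall>i<n. {xs ! i, xs ! ((i + 1) mod n)} \<in> E) \<longleftrightarrow>
      (\<forall>i. Suc i < n \<longrightarrow> {xs ! i, xs ! Suc i} \<in> E) \<and> {xs ! (n - 1), xs ! 0} \<in> E"
  proof
    assume H: "\<forall>i<n. {xs ! i, xs ! ((i + 1) mod n)} \<in> E"
    have "n - 1 + 1 = n" using True by simp
    then have "{xs ! (n - 1), xs ! 0} \<in> E" using H[rule_format, of "n - 1"] True by simp
    moreover have "{xs ! i, xs ! Suc i} \<in> E" if "Suc i < n" for i
      using H that by (metis Suc_eq_plus1 Suc_lessD mod_less)
    ultimately show "(\<forall>i. Suc i < n \<longrightarrow> {xs ! i, xs ! Suc i} \<in> E) \<and> {xs ! (n - 1), xs ! 0} \<in> E"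
      by simp
  next
    assume H: "(\<forall>i. Suc i < n \<longrightarrow> {xs ! i, xs ! Suc i} \<in> E) \<and> {xs ! (n - 1), xs ! 0} \<in> E"
    show "\<forall>i<n. {xs ! i, xs ! ((i + 1) mod n)} \<in> E"
    proof (intro allI impI)
      fix i assume "i < n"
      then consider "Suc i < n" | "i = n - 1" by linarith
      then show "{xs ! i, xs ! ((i + 1) mod n)} \<in> E"
      proof cases
        case 2
        moreover have "(n - 1 + 1) mod n = 0" using True by simp
        ultimately show ?thesis using H by simp
      qed (use H in simp)
    qed
  qed
  moreover have "xs \<noteq> []" using True by auto
  then have "last xs = xs ! (n - 1)" "hd xs = xs ! 0"
    using True by (simp_all add: last_conv_nth hd_conv_nth)
  ultimately show ?thesis unfolding is_cycle_def successively_iff_nth using True by simp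
qed (auto simp: is_cycle_def)

lemma is_cycle_rotate1:
  assumes "is_cycle E n xs"
  shows "is_cycle E n (rotate1 xs)"
proof -
  have "3 \<le> length xs" using assms by (simp add: is_cycle_def)
  then obtain x ys where xs: "xs = x # ys" by (cases xs) auto
  have ys: "ys \<noteq> []" using \<open>3 \<le> length xs\<close> xs by auto
  have "successively (\<lambda>u v. {u, v} \<in> E) (x # ys)" "{last ys, x} \<in> E"
    using assms ys by (simp_all add: xs is_cycle_iff_successively)
  then have "successively (\<lambda>u v. {u, v} \<in> E) (ys @ [x])" "{x, hd ys} \<in> E"
    using ys by (simp_all add: successively_append_iff successively_Cons)
  then show ?thesis using assms ys by (simp add: xs is_cycle_iff_successively)
qed

lemma is_cycle_rotate: "is_cycle E n xs \<Longrightarrow> is_cycle E n (rotate r xs)"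
  by (induction r) (simp_all add: is_cycle_rotate1)

lemma is_cycle_rev: "is_cycle E n xs \<Longrightarrow> is_cycle E n (rev xs)"
  by (auto simp: is_cycle_iff_successively insert_commute hd_rev last_rev)

lemma cycle_edges_subset: "is_cycle E n xs \<Longrightarrow> cycle_edges xs \<subseteq> E"
  by (auto simp: is_cycle_def cycle_edges_def)

lemma finite_cycle_edges: "finite (cycle_edges xs)"
  unfolding cycle_edges_def by (rule finite_image_set) simp

lemma cycle_edges_vertices: "{p, q} \<in> cycle_edges xs \<Longrightarrow> p \<in> set xs \<and> q \<in> set xs"
  by (auto simp: cycle_edges_def doubleton_eq_iff intro!: nth_mem mod_less_divisor)

lemma cycle_through_edge:
  assumes "is_cycle E n xs" "{p, q} \<in> cycle_edges xs"
  obtains ys where "is_cycle E n ys" "set ys = set xs" "hd ys = q" "last ys = p"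
proof -
  have n: "length xs = n" "3 \<le> n" using assms(1) by (auto simp: is_cycle_def)
  obtain i where i: "i < n" "{p, q} = {xs ! i, xs ! ((i + 1) mod n)}"
    using assms(2) n by (auto simp: cycle_edges_def)
  define zs where "zs = rotate i xs"
  have zs: "is_cycle E n zs" "set zs = set xs" "zs ! 0 = xs ! i" "zs ! 1 = xs ! ((i + 1) mod n)"
    using is_cycle_rotate[OF assms(1)] n i(1) by (auto simp: zs_def nth_rotate add.commute)
  have "3 \<le> length zs" using n by (simp add: zs_def)
  then obtain c d rest where cd: "zs = c # d # rest"
    by (auto simp: numeral_3_eq_3 Suc_le_length_iff)
  define ws where "ws = rotate1 zs"
  have ws: "is_cycle E n ws" "set ws = set xs" "hd ws = d" "last ws = c"
    using is_cycle_rotate1[OF zs(1)] zs(2) by (simp_all add: ws_def) (simp_all add: cd)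
  have "{p, q} = {c, d}" using i(2) zs(3,4) cd by simp
  then consider "p = c" "q = d" | "p = d" "q = c" by (auto simp: doubleton_eq_iff)
  then show thesis
  proof cases
    case 1
    with ws show thesis by (intro that[of ws]) simp_all
  next
    case 2
    with ws show thesis by (intro that[of "rev ws"]) (simp_all add: is_cycle_rev hd_rev last_rev)
  qed
qed

lemma is_cycle_glue:
  assumes cyc_xs: "is_cycle E n xs" and cyc_ys: "is_cycle E m ys"
    and "hd xs = y" "last xs = x" "hd ys = x" "last ys = y"
    and "set xs \<inter> set ys \<subseteq> {x, y}"
  shows "is_cycle E (n + m - 2) (xs @ butlast (tl ys))"
proof -
  define mid where "mid = butlast (tl ys)"
  let ?P = "\<lambda>u v. {u, v} \<in> E"
  have m: "length ys = m" "3 \<le> m" using cyc_ys by (simp_all add: is_cycle_def)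
  then have "tl ys \<noteq> []" by (cases ys) auto
  then have ys_eq: "ys = x # mid @ [y]"
    using assms(5,6) unfolding mid_def by (metis append_butlast_last_id hd_Cons_tl last_tl tl_Nil)
  have "length mid = m - 2" using m by (simp add: mid_def)
  with m have "mid \<noteq> []" by auto
  have "successively ?P ys" "distinct ys" using cyc_ys by (simp_all add: is_cycle_iff_successively)
  then have "successively ?P (x # mid @ [y])" "distinct (x # mid @ [y])"
    by (simp_all only: ys_eq[symmetric])
  with \<open>mid \<noteq> []\<close> have mid: "{x, hd mid} \<in> E" "successively ?P mid" "{last mid, y} \<in> E"
      "distinct mid" "x \<notin> set mid" "y \<notin> set mid"
    by (simp_all add: successively_append_iff successively_Cons)
  have "set xs \<inter> set mid = {}" using assms(7) mid(5,6) by (auto simp: ys_eq)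
  moreover have "3 \<le> n" "length xs = n" "distinct xs" "successively ?P xs"
    using cyc_xs by (simp_all add: is_cycle_iff_successively)
  moreover have "xs \<noteq> []" using \<open>length xs = n\<close> \<open>3 \<le> n\<close> by auto
  ultimately show ?thesis
    unfolding mid_def[symmetric] is_cycle_iff_successively
    using assms(3,4) mid \<open>mid \<noteq> []\<close> \<open>length mid = m - 2\<close> m(2)
    by (simp add: successively_append_iff)
qed

lemma sym_diff_cycle_subset_D:
  assumes "is_cycle E n xs" "E \<subseteq> OE k" "p \<in> set xs" "q \<in> set xs"
  shows "sym_diff p q \<subseteq> D (cycle_edges xs)"
proof -
  have n: "length xs = n" using assms(1) by (simp add: is_cycle_def)
  have edge: "sym_diff (xs ! t) (xs ! Suc t) \<subseteq> D (cycle_edges xs)" if "Suc t < n" for t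
  proof -
    have "{xs ! t, xs ! Suc t} \<in> cycle_edges xs"
      using that n unfolding cycle_edges_def by (auto intro!: exI[of _ t])
    moreover from this have "{xs ! t, xs ! Suc t} \<in> OE k"
      using cycle_edges_subset[OF assms(1)] assms(2) by blast
    ultimately show ?thesis by (simp add: sym_diff_OE D_def)
  qed
  have path: "sym_diff (xs ! i) (xs ! j) \<subseteq> D (cycle_edges xs)" if "i \<le> j" "j < n" for i j
    using that
  proof (induction j rule: dec_induct)
    case (step t)
    then have "sym_diff (xs ! i) (xs ! t) \<subseteq> D (cycle_edges xs)"
      "sym_diff (xs ! t) (xs ! Suc t) \<subseteq> D (cycle_edges xs)"
      using edge[of t] by simp_all
    then show ?case by blast
  qed simp
  obtain i j where "i < n" "j < n" "p = xs ! i" "q = xs ! j"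
    using assms(3,4) n by (metis in_set_conv_nth)
  then show ?thesis using path[of i j] path[of j i] by (cases "i \<le> j") auto
qed

lemma cycles_sharing_one_direction_meet_in_edge:
  assumes "E \<subseteq> OE k" "is_cycle E n xs" "is_cycle E m ys"
    and "{x, y} \<in> cycle_edges xs" "{x, y} \<in> cycle_edges ys"
    and "D (cycle_edges xs) \<inter> D (cycle_edges ys) \<subseteq> {dir {x, y}}"
  shows "set xs \<inter> set ys \<subseteq> {x, y}"
proof
  fix u assume u: "u \<in> set xs \<inter> set ys"
  have "x \<in> set xs" "x \<in> set ys" using assms(4,5) cycle_edges_vertices by simp_all
  with u have "sym_diff u x \<subseteq> D (cycle_edges xs)" "sym_diff u x \<subseteq> D (cycle_edges ys)"
    using sym_diff_cycle_subset_D[OF assms(2,1)] sym_diff_cycle_subset_D[OF assms(3,1)] by simp_all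
  with assms(6) have "sym_diff u x \<subseteq> {dir {x, y}}" by blast
  moreover have "{x, y} \<in> OE k" using assms(1,4) cycle_edges_subset[OF assms(2)] by blast
  then have "sym_diff y x = {dir {x, y}}" using sym_diff_OE by blast
  ultimately have "sym_diff u x = {} \<or> sym_diff u x = sym_diff y x"
    using subset_singletonD by metis
  then have "u = x \<or> u = y" by blast
  then show "u \<in> {x, y}" by simp
qed

theorem lemma5p4:
  fixes k l a b :: nat and E :: "nat set set set" and vs ws :: "nat set list"
  assumes "l \<ge> 3" and "a \<ge> 2" and "b \<ge> 2" and "a + b = l + 1"
    and "spanning_subgraph k E"
    and "\<not> (\<exists>us. is_cycle E (4 * l + 2) us)"
    and "is_cycle E (4 * a) vs" and "is_cycle E (4 * b) ws"
    and "cycle_edges vs \<inter> cycle_edges ws \<noteq> {}"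
  shows "card (D (cycle_edges vs) \<inter> D (cycle_edges ws)) \<ge> 2"
proof (rule ccontr)
  let ?A = "D (cycle_edges vs) \<inter> D (cycle_edges ws)"
  assume "\<not> card ?A \<ge> 2"
  obtain e where e: "e \<in> cycle_edges vs" "e \<in> cycle_edges ws" using assms(9) by blast
  obtain x y where "e = {x, y}" using e(1) unfolding cycle_edges_def mem_Collect_eq by blast
  with e have xy: "{x, y} \<in> cycle_edges vs" "{x, y} \<in> cycle_edges ws" by simp_all
  have "card ?A \<le> Suc 0" "finite ?A" "dir {x, y} \<in> ?A"
    using \<open>\<not> card ?A \<ge> 2\<close> xy by (simp_all add: D_def finite_cycle_edges)
  then have "?A \<subseteq> {dir {x, y}}" using card_le_Suc0_iff_eq by blast
  with assms(5,7,8) xy have meet: "set vs \<inter> set ws \<subseteq> {x, y}"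
    unfolding spanning_subgraph_def by (rule cycles_sharing_one_direction_meet_in_edge)
  have yx: "{y, x} \<in> cycle_edges ws" using xy(2) by (simp add: insert_commute)
  obtain vs' where "is_cycle E (4 * a) vs'" "set vs' = set vs" "hd vs' = y" "last vs' = x"
    using cycle_through_edge[OF assms(7) xy(1)] .
  moreover obtain ws' where "is_cycle E (4 * b) ws'" "set ws' = set ws" "hd ws' = x" "last ws' = y"
    using cycle_through_edge[OF assms(8) yx] .
  ultimately have "is_cycle E (4 * a + 4 * b - 2) (vs' @ butlast (tl ws'))"
    using meet by (intro is_cycle_glue) simp_all
  moreover have "4 * a + 4 * b - 2 = 4 * l + 2" using assms(4) by simp
  ultimately show False using assms(6) by metis
qed

end
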